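(* Let $G$ be a network as described in the context and consider (BBMG) on $G$ with coefficients $a_i>0$, $b_i\in\mathbb{R}\setminus\{0\}$, $d_i\in\mathbb{R}$. If there exists a non-constant travelling wave solution $u$ of (BBMG) with all speeds $c_i>0$, then no ramification vertex of $G$ is a sink or a source.
   Context: A network $G$ is obtained from a non-empty, simple, connected, at most countable, locally finite graph by realizing each edge $\mathsf{e}_j$ ($j\in\mathbf{E}\subset\mathbb{N}$) as the image of a $\mathcal{C}^2$ Jordan curve $\pi_j:[0,\ell_j]\to\mathbb{R}^m$ with arc-length parameter $x_j\in[0,\ell_j]$; two distinct edges meet at most in one common vertex. For a vertex $\mathsf{v}$, $N(\mathsf{v})$ is the set of indices of edges incident to $\mathsf{v}$; $V_r$ is the set of vertices of degree $\ge2$ (ramification vertices). Incidence numbers: $\iota_{ij}=1$ if $\pi_j(\ell_j)=\mathsf{v}_i$ (edge incoming at $\mathsf{v}_i$), $\iota_{ij}=-1$ if $\pi_j(0)=\mathsf{v}_i$ (edge outgoing at $\mathsf{v}_i$), $\iota_{ij}=0$ otherwise. A vertex is a sink if all its incident edges are incoming, a source if all are outgoing. For $u$ on $G$, $u_j(x_j,t)=u(\pi_j(x_j),t)$, $\partial_j=\partial/\partial x_j$, and $u_j(t,\mathsf{v}_i)$, $\partial_ju_j(t,\mathsf{v}_i)$ are values at $x_j=\pi_j^{-1}(\mathsf{v}_i)$. (BBMG): $\partial_t u_i - a_i\partial_i^2\partial_t u_i + b_i u_i\partial_i u_i + d_i\partial_i u_i=0$ on each $\mathsf{e}_i$, $t>0$;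 for each $\mathsf{v}_p\in V_r$ and $t\ge0$: $u_j(t,\mathsf{v}_p)=u_k(t,\mathsf{v}_p)$ for $j,k\in N(\mathsf{v}_p)$, and $\sum_j\iota_{pj}a_j\partial_ju_j(t,\mathsf{v}_p)=0$. No initial or boundary-vertex conditions. A strong solution is a function $u$ continuous on $G$ with $u_i\in\mathcal{C}^{1,1}(\mathsf{e}_i\times[0,\infty))$, $\partial_tu_i\in\mathcal{C}^{2,0}(\mathsf{e}_i\times[0,\infty))$, satisfying (BBMG) pointwise. A travelling wave is a strong solution with speeds $c_i\ge0$ and $\varphi_i\in\mathcal{C}^3(\mathbb{R})$ such that $u_i(x_i,t)=\varphi_i(x_i-c_it)$ for all $x_i\in\mathsf{e}_i$, $t\ge0$. *)

theory Defs
  imports "HOL-Analysis.Analysis"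
begin

text \<open>Networks: edges indexed by E \<subseteq> nat, edge j realized by the curve
  gam j restricted to [0, len j], arc-length parametrized, C^2, injective (Jordan arc).\<close>

definition C2_arc :: "(real \<Rightarrow> 'a::euclidean_space) \<Rightarrow> real \<Rightarrow> bool" where
  "C2_arc f l \<longleftrightarrow> (\<exists>f' f''. (\<forall>x\<in>{0..l}.
      (f has_vector_derivative f' x) (at x within {0..l}) \<and>
      (f' has_vector_derivative f'' x) (at x within {0..l}) \<and>
      norm (f' x) = 1) \<and> continuous_on {0..l} f'')"

definition edge_img :: "(nat \<Rightarrow> real) \<Rightarrow> (nat \<Rightarrow> real \<Rightarrow> 'a) \<Rightarrow> nat \<Rightarrow> 'a set" where
  "edge_img len gam j = gam j ` {0..len j}"

definition ends :: "(nat \<Rightarrow> real) \<Rightarrow> (nat \<Rightarrow> real \<Rightarrow> 'a) \<Rightarrow> nat \<Rightarrow> 'a set" where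
  "ends len gam j = {gam j 0, gam j (len j)}"

definition net_points :: "nat set \<Rightarrow> (nat \<Rightarrow> real) \<Rightarrow> (nat \<Rightarrow> real \<Rightarrow> 'a) \<Rightarrow> 'a set" where
  "net_points E len gam = (\<Union>j\<in>E. edge_img len gam j)"

definition vertices :: "nat set \<Rightarrow> (nat \<Rightarrow> real) \<Rightarrow> (nat \<Rightarrow> real \<Rightarrow> 'a) \<Rightarrow> 'a set" where
  "vertices E len gam = (\<Union>j\<in>E. ends len gam j)"

definition incident :: "nat set \<Rightarrow> (nat \<Rightarrow> real) \<Rightarrow> (nat \<Rightarrow> real \<Rightarrow> 'a) \<Rightarrow> 'a \<Rightarrow> nat set" where
  "incident E len gam v = {j\<in>E. v \<in> ends len gam j}"

definition ram_vertices :: "nat set \<Rightarrow> (nat \<Rightarrow> real) \<Rightarrow> (nat \<Rightarrow> real \<Rightarrow> 'a) \<Rightarrow> 'a set" where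
  "ram_vertices E len gam = {v\<in>vertices E len gam. card (incident E len gam v) \<ge> 2}"

definition adjacent :: "nat set \<Rightarrow> (nat \<Rightarrow> real) \<Rightarrow> (nat \<Rightarrow> real \<Rightarrow> 'a) \<Rightarrow> 'a \<Rightarrow> 'a \<Rightarrow> bool" where
  "adjacent E len gam v w \<longleftrightarrow> (\<exists>j\<in>E. ends len gam j = {v, w})"

definition network :: "nat set \<Rightarrow> (nat \<Rightarrow> real) \<Rightarrow> (nat \<Rightarrow> real \<Rightarrow> 'a::euclidean_space) \<Rightarrow> bool" where
  "network E len gam \<longleftrightarrow>
     E \<noteq> {} \<and>
     (\<forall>j\<in>E. len j > 0 \<and> C2_arc (gam j) (len j) \<and> inj_on (gam j) {0..len j}) \<and>
     (\<forall>i\<in>E. \<forall>j\<in>E. i \<noteq> j \<longrightarrow>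
        edge_img len gam i \<inter> edge_img len gam j \<subseteq> ends len gam i \<inter> ends len gam j \<and>
        card (ends len gam i \<inter> ends len gam j) \<le> 1) \<and>
     (\<forall>v\<in>vertices E len gam. finite (incident E len gam v)) \<and>
     (\<forall>v\<in>vertices E len gam. \<forall>w\<in>vertices E len gam.
        (v, w) \<in> {(x, y). adjacent E len gam x y}\<^sup>*)"

definition iota :: "(nat \<Rightarrow> real) \<Rightarrow> (nat \<Rightarrow> real \<Rightarrow> 'a) \<Rightarrow> 'a \<Rightarrow> nat \<Rightarrow> real" where
  "iota len gam v j = (if gam j (len j) = v then 1 else if gam j 0 = v then -1 else 0)"

definition vparam :: "(nat \<Rightarrow> real) \<Rightarrow> (nat \<Rightarrow> real \<Rightarrow> 'a) \<Rightarrow> nat \<Rightarrow> 'a \<Rightarrow> real" where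
  "vparam len gam j v = (if gam j 0 = v then 0 else len j)"

definition is_sink :: "nat set \<Rightarrow> (nat \<Rightarrow> real) \<Rightarrow> (nat \<Rightarrow> real \<Rightarrow> 'a) \<Rightarrow> 'a \<Rightarrow> bool" where
  "is_sink E len gam v \<longleftrightarrow> (\<forall>j\<in>incident E len gam v. iota len gam v j = 1)"

definition is_source :: "nat set \<Rightarrow> (nat \<Rightarrow> real) \<Rightarrow> (nat \<Rightarrow> real \<Rightarrow> 'a) \<Rightarrow> 'a \<Rightarrow> bool" where
  "is_source E len gam v \<longleftrightarrow> (\<forall>j\<in>incident E len gam v. iota len gam v j = -1)"

text \<open>Strong solution of (BBMG). u_j(x,t) = u(pi_j x, t); ux, ut, utx, utxx are the
  partial derivatives d_x u_j, d_t u_j, d_x d_t u_j, d_x^2 d_t u_j (one-sided at the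
  boundary of e_j x [0,oo)), all continuous on [0,len j] x [0,oo).\<close>
definition strong_solution ::
  "nat set \<Rightarrow> (nat \<Rightarrow> real) \<Rightarrow> (nat \<Rightarrow> real \<Rightarrow> 'a::euclidean_space) \<Rightarrow>
   (nat \<Rightarrow> real) \<Rightarrow> (nat \<Rightarrow> real) \<Rightarrow> (nat \<Rightarrow> real) \<Rightarrow> ('a \<Rightarrow> real \<Rightarrow> real) \<Rightarrow> bool" where
  "strong_solution E len gam a b d u \<longleftrightarrow>
     continuous_on (net_points E len gam \<times> {0..}) (\<lambda>(p, t). u p t) \<and>
     (\<exists>ux ut utx utxx :: nat \<Rightarrow> real \<Rightarrow> real \<Rightarrow> real.
       (\<forall>j\<in>E.
        (\<forall>x\<in>{0..len j}. \<forall>t\<in>{0..}.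
           ((\<lambda>y. u (gam j y) t) has_real_derivative ux j x t) (at x within {0..len j}) \<and>
           ((\<lambda>s. u (gam j x) s) has_real_derivative ut j x t) (at t within {0..}) \<and>
           ((\<lambda>y. ut j y t) has_real_derivative utx j x t) (at x within {0..len j}) \<and>
           ((\<lambda>y. utx j y t) has_real_derivative utxx j x t) (at x within {0..len j})) \<and>
        continuous_on ({0..len j} \<times> {0..}) (\<lambda>(x, t). u (gam j x) t) \<and>
        continuous_on ({0..len j} \<times> {0..}) (\<lambda>(x, t). ux j x t) \<and>
        continuous_on ({0..len j} \<times> {0..}) (\<lambda>(x, t). ut j x t) \<and>
        continuous_on ({0..len j} \<times> {0..}) (\<lambda>(x, t). utx j x t) \<and>
        continuous_on ({0..len j} \<times> {0..}) (\<lambda>(x, t). utxx j x t) \<and>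
        (\<forall>x\<in>{0<..<len j}. \<forall>t>0.
           ut j x t - a j * utxx j x t + b j * u (gam j x) t * ux j x t + d j * ux j x t = 0)) \<and>
       (\<forall>v\<in>ram_vertices E len gam. \<forall>t\<ge>0.
           (\<Sum>k\<in>incident E len gam v. iota len gam v k * a k * ux k (vparam len gam k v) t) = 0)) \<and>
     (\<forall>v\<in>ram_vertices E len gam. \<forall>t\<ge>0. \<forall>j\<in>incident E len gam v. \<forall>k\<in>incident E len gam v.
        u (gam j (vparam len gam j v)) t = u (gam k (vparam len gam k v)) t)"

definition C3 :: "(real \<Rightarrow> real) \<Rightarrow> bool" where
  "C3 f \<longleftrightarrow> (\<exists>f1 f2 f3. (\<forall>x. (f has_real_derivative f1 x) (at x) \<and>
      (f1 has_real_derivative f2 x) (at x) \<and> (f2 has_real_derivative f3 x) (at x)) \<and>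
      continuous_on UNIV f3)"

definition travelling_wave ::
  "nat set \<Rightarrow> (nat \<Rightarrow> real) \<Rightarrow> (nat \<Rightarrow> real \<Rightarrow> 'a::euclidean_space) \<Rightarrow>
   (nat \<Rightarrow> real) \<Rightarrow> (nat \<Rightarrow> real) \<Rightarrow> (nat \<Rightarrow> real) \<Rightarrow> ('a \<Rightarrow> real \<Rightarrow> real) \<Rightarrow>
   (nat \<Rightarrow> real) \<Rightarrow> (nat \<Rightarrow> real \<Rightarrow> real) \<Rightarrow> bool" where
  "travelling_wave E len gam a b d u c phi \<longleftrightarrow>
     strong_solution E len gam a b d u \<and>
     (\<forall>j\<in>E. c j \<ge> 0 \<and> C3 (phi j) \<and>
        (\<forall>x\<in>{0..len j}. \<forall>t\<ge>0. u (gam j x) t = phi j (x - c j * t)))"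

end

theory Submission
  imports Defs
begin

text \<open>
  On each edge a travelling wave \<open>u\<^sub>j(x, t) = \<phi>\<^sub>j(x - c\<^sub>j t)\<close> turns (BBMG) into the
  third-order ODE \<open>a c \<phi>''' = (c - d - b \<phi>) \<phi>'\<close> on \<open>(-\<infinity>, l)\<close>; an energy estimate for
  \<open>(\<phi> - C)\<^sup>2 + \<phi>'\<^sup>2 + \<phi>''\<^sup>2\<close> with Gronwall's inequality shows that a profile constant
  on \<open>(-\<infinity>, 0]\<close> is constant on \<open>(-\<infinity>, l]\<close>, the whole range of \<open>x - c t\<close>.

  At a sink or a source all incident edges have the same incidence number. Continuity makes
  the vertex value \<open>g(t)\<close> common to them, and there \<open>\<partial>\<^sub>x u\<^sub>k = -g'(t) / c\<^sub>k\<close>, so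
  Kirchhoff's condition reads \<open>g'(t) \<Sum> a\<^sub>k / c\<^sub>k = 0\<close>. Hence \<open>g\<close> is constant, the incident
  profiles are constant on the half-lines swept out from the vertex, and by the ODE argument
  on all of \<open>(-\<infinity>, l\<^sub>k]\<close>. Continuity at ramification vertices carries this along the
  connected network, so \<open>u\<close> would be constant.
\<close>

lemma isCont_eq_if_const_left:
  fixes f :: "real \<Rightarrow> real"
  assumes "isCont f x" and "\<And>z. z < x \<Longrightarrow> f z = C"
  shows "f x = C"
proof -
  have "(f \<longlongrightarrow> f x) (at_left x)"
    using assms(1) by (simp add: isCont_def filterlim_at_split)
  moreover have "eventually (\<lambda>z. f z = C) (at_left x)"
    unfolding eventually_at_left_field using assms(2) by (intro exI[of _ "x - 1"]) auto
  then have "(f \<longlongrightarrow> C) (at_left x)"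
    by (rule tendsto_eventually)
  ultimately show ?thesis
    using tendsto_unique trivial_limit_at_left_real by blast
qed

lemma DERIV_zero_if_const_on_open:
  fixes f :: "real \<Rightarrow> real"
  assumes "(f has_real_derivative D) (at z)" and "open S" "z \<in> S"
    and "\<And>y. y \<in> S \<Longrightarrow> f y = C"
  shows "D = 0"
proof -
  have "((\<lambda>_. C) has_real_derivative D) (at z)"
    by (rule has_field_derivative_transform_within_open[OF assms(1-3)]) (use assms(4) in simp)
  then show ?thesis
    using DERIV_const DERIV_unique by blast
qed

lemma has_field_derivative_within_eq_at:
  fixes f g :: "real \<Rightarrow> real"
  assumes "(f has_real_derivative D) (at x within S)" and "(g has_real_derivative D') (at x)"
    and "\<And>y. y \<in> S \<Longrightarrow> f y = g y" and "x \<in> S" and "x islimpt S"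
  shows "D = D'"
proof -
  have g': "(g has_derivative (*) D') (at x within S)"
    using has_field_derivative_at_within[OF assms(2)] unfolding has_field_derivative_def .
  have "(f has_derivative (*) D') (at x within S)"
    by (rule has_derivative_transform[OF assms(4) _ g']) (simp add: assms(3))
  then have "(f has_real_derivative D') (at x within S)"
    unfolding has_field_derivative_def .
  then show ?thesis
    using assms(1,5) has_field_derivative_unique trivial_limit_within by blast
qed

lemma DERIV_travelling_wave:
  fixes f f' :: "real \<Rightarrow> real"
  assumes "\<And>z. (f has_real_derivative f' z) (at z)"
  shows DERIV_travelling_wave_space: "((\<lambda>y. f (y - c * t)) has_real_derivative f' (x - c * t)) (at x)"
    and DERIV_travelling_wave_time: "((\<lambda>s. f (x - c * s)) has_real_derivative - c * f' (x - c * t)) (at t)"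
proof -
  show "((\<lambda>y. f (y - c * t)) has_real_derivative f' (x - c * t)) (at x)"
  proof -
    have "((\<lambda>y. y - c * t) has_real_derivative 1) (at x)"
      by (auto intro!: derivative_eq_intros)
    from DERIV_chain2[OF assms this] show ?thesis by simp
  qed
  show "((\<lambda>s. f (x - c * s)) has_real_derivative - c * f' (x - c * t)) (at t)"
  proof -
    have "((\<lambda>s. x - c * s) has_real_derivative - c) (at t)"
      by (auto intro!: derivative_eq_intros)
    from DERIV_chain2[OF assms this] show ?thesis by (simp add: mult.commute)
  qed
qed

lemma gronwall_exp_bound:
  fixes e e' :: "real \<Rightarrow> real"
  assumes "0 \<le> z"
    and "\<And>y. 0 \<le> y \<Longrightarrow> y \<le> z \<Longrightarrow> (e has_real_derivative e' y) (at y)"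
    and "\<And>y. 0 \<le> y \<Longrightarrow> y \<le> z \<Longrightarrow> e' y \<le> M * e y"
  shows "e z \<le> exp (M * z) * e 0"
proof -
  define h where "h y = exp (- M * y) * e y" for y
  have "h z \<le> h 0"
  proof (rule DERIV_nonpos_imp_nonincreasing[OF assms(1)])
    fix y assume y: "0 \<le> y" "y \<le> z"
    have "(h has_real_derivative exp (- M * y) * (e' y - M * e y)) (at y)"
      unfolding h_def by (auto intro!: derivative_eq_intros assms(2)[OF y] simp: algebra_simps)
    moreover have "exp (- M * y) * (e' y - M * e y) \<le> 0"
      using assms(3)[OF y] by (simp add: mult_nonneg_nonpos)
    ultimately show "\<exists>D. (h has_real_derivative D) (at y) \<and> D \<le> 0" by blast
  qed
  then show ?thesis
    unfolding h_def by (simp add: exp_minus field_simps)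
qed

lemma third_order_ode_const_initial_value:
  fixes \<phi> \<phi>' \<phi>'' \<phi>''' :: "real \<Rightarrow> real"
  assumes \<phi>': "\<And>y. (\<phi> has_real_derivative \<phi>' y) (at y)"
    and \<phi>'': "\<And>y. (\<phi>' has_real_derivative \<phi>'' y) (at y)"
    and \<phi>''': "\<And>y. (\<phi>'' has_real_derivative \<phi>''' y) (at y)"
    and ode: "\<And>y. 0 \<le> y \<Longrightarrow> y \<le> z \<Longrightarrow> \<phi>''' y = (\<alpha> + \<beta> * \<phi> y) * \<phi>' y"
    and init: "\<phi> 0 = C" "\<phi>' 0 = 0" "\<phi>'' 0 = 0" and "0 \<le> z"
  shows "\<phi> z = C"
proof -
  have "continuous_on {0..z} (\<lambda>y. \<alpha> + \<beta> * \<phi> y)"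
    by (intro continuous_intros continuous_at_imp_continuous_on ballI DERIV_isCont[OF \<phi>'])
  then obtain K where K: "\<And>y. y \<in> {0..z} \<Longrightarrow> \<bar>\<alpha> + \<beta> * \<phi> y\<bar> \<le> K"
    using compact_continuous_image[of "{0..z}"] compact_imp_bounded bounded_real
    by (metis compact_Icc imageI)
  define M where "M = 2 + K\<^sup>2"
  define e where "e y = (\<phi> y - C)\<^sup>2 + (\<phi>' y)\<^sup>2 + (\<phi>'' y)\<^sup>2" for y
  define e' where "e' y = 2 * (\<phi> y - C) * \<phi>' y + 2 * \<phi>' y * \<phi>'' y + 2 * \<phi>'' y * \<phi>''' y" for y
  have "e z \<le> exp (M * z) * e 0"
  proof (rule gronwall_exp_bound[OF \<open>0 \<le> z\<close>])
    fix y assume y: "0 \<le> y" "y \<le> z"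
    show "(e has_real_derivative e' y) (at y)"
      unfolding e_def e'_def using \<phi>' \<phi>'' \<phi>'''
      by (auto intro!: derivative_eq_intros simp: algebra_simps power2_eq_square)
    have "(\<alpha> + \<beta> * \<phi> y)\<^sup>2 \<le> K\<^sup>2"
      using K[of y] y by (metis abs_ge_zero atLeastAtMost_iff power2_abs power_mono)
    then have "(\<phi>''' y)\<^sup>2 \<le> K\<^sup>2 * (\<phi>' y)\<^sup>2"
      using ode[OF y] by (simp add: power_mult_distrib mult_right_mono)
    moreover have "2 * (\<phi> y - C) * \<phi>' y \<le> (\<phi> y - C)\<^sup>2 + (\<phi>' y)\<^sup>2"
      and "2 * \<phi>' y * \<phi>'' y \<le> (\<phi>' y)\<^sup>2 + (\<phi>'' y)\<^sup>2"
      and "2 * \<phi>'' y * \<phi>''' y \<le> (\<phi>'' y)\<^sup>2 + (\<phi>''' y)\<^sup>2"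
      by (rule sum_squares_bound)+
    ultimately have "e' y \<le> (\<phi> y - C)\<^sup>2 + M * (\<phi>' y)\<^sup>2 + 2 * (\<phi>'' y)\<^sup>2"
      unfolding e'_def M_def by (simp add: algebra_simps)
    also have "\<dots> \<le> M * e y"
      unfolding M_def e_def by (simp add: algebra_simps)
    finally show "e' y \<le> M * e y" .
  qed
  moreover have "e 0 = 0"
    unfolding e_def using init by simp
  ultimately have "e z \<le> 0" by simp
  then have "(\<phi> z - C)\<^sup>2 \<le> 0"
    unfolding e_def using zero_le_power2[of "\<phi>' z"] zero_le_power2[of "\<phi>'' z"] by linarith
  then show ?thesis by simp
qed

lemma third_order_ode_const_extends:
  fixes \<phi> \<phi>' \<phi>'' \<phi>''' :: "real \<Rightarrow> real"
  assumes \<phi>': "\<And>z. (\<phi> has_real_derivative \<phi>' z) (at z)"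
    and \<phi>'': "\<And>z. (\<phi>' has_real_derivative \<phi>'' z) (at z)"
    and \<phi>''': "\<And>z. (\<phi>'' has_real_derivative \<phi>''' z) (at z)"
    and ode: "\<And>z. z < l \<Longrightarrow> \<phi>''' z = (\<alpha> + \<beta> * \<phi> z) * \<phi>' z"
    and const: "\<And>z. z \<le> 0 \<Longrightarrow> \<phi> z = C"
  shows "z \<le> l \<Longrightarrow> \<phi> z = C"
proof -
  have \<phi>'_neg: "\<phi>' z = 0" if "z < 0" for z
    by (rule DERIV_zero_if_const_on_open[OF \<phi>', of "{..<0}"]) (use that const in auto)
  have \<phi>''_neg: "\<phi>'' z = 0" if "z < 0" for z
    by (rule DERIV_zero_if_const_on_open[OF \<phi>'', of "{..<0}"]) (use that \<phi>'_neg in auto)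
  have init: "\<phi> 0 = C" "\<phi>' 0 = 0" "\<phi>'' 0 = 0"
    using const isCont_eq_if_const_left[OF DERIV_isCont[OF \<phi>''] \<phi>'_neg]
      isCont_eq_if_const_left[OF DERIV_isCont[OF \<phi>'''] \<phi>''_neg] by simp_all
  have below: "\<phi> z = C" if "z < l" for z
  proof (cases "z \<le> 0")
    case False
    show ?thesis
      by (rule third_order_ode_const_initial_value[OF \<phi>' \<phi>'' \<phi>''' ode init])
        (use False \<open>z < l\<close> in auto)
  qed (use const in blast)
  moreover have "\<phi> l = C"
    by (rule isCont_eq_if_const_left[OF DERIV_isCont[OF \<phi>']]) (rule below)
  ultimately show "z \<le> l \<Longrightarrow> \<phi> z = C"
    by (cases "z = l") auto
qed

lemma third_order_ode_const_from_endpoint: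
  fixes \<phi> \<phi>' \<phi>'' \<phi>''' :: "real \<Rightarrow> real"
  assumes \<phi>': "\<And>z. (\<phi> has_real_derivative \<phi>' z) (at z)"
    and \<phi>'': "\<And>z. (\<phi>' has_real_derivative \<phi>'' z) (at z)"
    and \<phi>''': "\<And>z. (\<phi>'' has_real_derivative \<phi>''' z) (at z)"
    and ode: "\<And>z. z < l \<Longrightarrow> \<phi>''' z = (\<alpha> + \<beta> * \<phi> z) * \<phi>' z"
    and "0 < c" and "p = 0 \<or> p = l"
    and const: "\<And>t. 0 \<le> t \<Longrightarrow> \<phi> (p - c * t) = C"
  shows "z \<le> l \<Longrightarrow> \<phi> z = C"
proof -
  have half_line: "\<phi> z = C" if "z \<le> p" for z
    using const[of "(p - z) / c"] that \<open>0 < c\<close> by simp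
  from \<open>p = 0 \<or> p = l\<close> show "z \<le> l \<Longrightarrow> \<phi> z = C"
  proof
    assume "p = 0"
    then show "z \<le> l \<Longrightarrow> \<phi> z = C"
      using third_order_ode_const_extends[OF \<phi>' \<phi>'' \<phi>''' ode] half_line by blast
  qed (use half_line in blast)
qed

locale bbm_travelling_wave_edge =
  fixes l c :: real and \<phi> \<phi>' \<phi>'' \<phi>''' :: "real \<Rightarrow> real"
    and w wx wt wtx wtxx :: "real \<Rightarrow> real \<Rightarrow> real"
  assumes len_pos: "0 < l"
    and \<phi>': "\<And>z. (\<phi> has_real_derivative \<phi>' z) (at z)"
    and \<phi>'': "\<And>z. (\<phi>' has_real_derivative \<phi>'' z) (at z)"
    and \<phi>''': "\<And>z. (\<phi>'' has_real_derivative \<phi>''' z) (at z)"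
    and wave: "\<And>x t. x \<in> {0..l} \<Longrightarrow> 0 \<le> t \<Longrightarrow> w x t = \<phi> (x - c * t)"
    and wx: "\<And>x t. x \<in> {0..l} \<Longrightarrow> 0 \<le> t \<Longrightarrow>
      ((\<lambda>y. w y t) has_real_derivative wx x t) (at x within {0..l})"
    and wt: "\<And>x t. x \<in> {0..l} \<Longrightarrow> 0 \<le> t \<Longrightarrow>
      ((\<lambda>s. w x s) has_real_derivative wt x t) (at t within {0..})"
    and wtx: "\<And>x t. x \<in> {0..l} \<Longrightarrow> 0 \<le> t \<Longrightarrow>
      ((\<lambda>y. wt y t) has_real_derivative wtx x t) (at x within {0..l})"
    and wtxx: "\<And>x t. x \<in> {0..l} \<Longrightarrow> 0 \<le> t \<Longrightarrow>
      ((\<lambda>y. wtx y t) has_real_derivative wtxx x t) (at x within {0..l})"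
begin

lemma islimpt_edge: "x \<in> {0..l} \<Longrightarrow> x islimpt {0..l}"
  using len_pos by simp

lemma wx_eq: "x \<in> {0..l} \<Longrightarrow> 0 \<le> t \<Longrightarrow> wx x t = \<phi>' (x - c * t)"
  by (rule has_field_derivative_within_eq_at[OF wx DERIV_travelling_wave_space[OF \<phi>']])
    (simp_all add: wave islimpt_edge)

lemma wt_eq: "x \<in> {0..l} \<Longrightarrow> 0 \<le> t \<Longrightarrow> wt x t = - c * \<phi>' (x - c * t)"
proof (rule has_field_derivative_within_eq_at[OF wt DERIV_travelling_wave_time[OF \<phi>']])
  show "0 \<le> t \<Longrightarrow> t islimpt {0..}"
    using islimpt_subset[OF islimpt_Icc[of t "t + 1", THEN iffD2]] by auto
qed (simp_all add: wave)

lemma wtx_eq: "x \<in> {0..l} \<Longrightarrow> 0 \<le> t \<Longrightarrow> wtx x t = - c * \<phi>'' (x - c * t)"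
  by (rule has_field_derivative_within_eq_at[OF wtx DERIV_cmult[OF DERIV_travelling_wave_space[OF \<phi>'']]])
    (simp_all add: wt_eq islimpt_edge)

lemma wtxx_eq: "x \<in> {0..l} \<Longrightarrow> 0 \<le> t \<Longrightarrow> wtxx x t = - c * \<phi>''' (x - c * t)"
  by (rule has_field_derivative_within_eq_at[OF wtxx DERIV_cmult[OF DERIV_travelling_wave_space[OF \<phi>''']]])
    (simp_all add: wtx_eq islimpt_edge)

lemma profile_ode:
  assumes "0 < c" and "a \<noteq> 0"
    and pde: "\<And>x t. x \<in> {0<..<l} \<Longrightarrow> 0 < t \<Longrightarrow>
      wt x t - a * wtxx x t + b * w x t * wx x t + d * wx x t = 0"
    and "z < l"
  shows "\<phi>''' z = ((c - d) / (a * c) + - b / (a * c) * \<phi> z) * \<phi>' z"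
proof -
  \<comment> \<open>every \<open>z < l\<close> is reached as \<open>x - c t\<close> from some interior point \<open>x\<close> at a positive time \<open>t\<close>\<close>
  define x where "x = max (l / 2) ((z + l) / 2)"
  define t where "t = (x - z) / c"
  have x: "x \<in> {0<..<l}" "x \<in> {0..l}" and "z < x"
    unfolding x_def using len_pos \<open>z < l\<close> by (auto simp: max_def)
  then have t: "0 < t" and xt: "x - c * t = z"
    unfolding t_def using \<open>0 < c\<close> by auto
  have "- c * \<phi>' z - a * (- c * \<phi>''' z) + b * \<phi> z * \<phi>' z + d * \<phi>' z = 0"
    using pde[OF x(1) t] wt_eq[OF x(2)] wtxx_eq[OF x(2)] wx_eq[OF x(2)] wave[OF x(2)] t xt
    by simp
  then have "a * c * \<phi>''' z = (c - d - b * \<phi> z) * \<phi>' z"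
    by (simp add: algebra_simps)
  then have "\<phi>''' z = (c - d - b * \<phi> z) * \<phi>' z / (a * c)"
    using \<open>0 < c\<close> \<open>a \<noteq> 0\<close> by (simp add: field_simps)
  also have "\<dots> = ((c - d) / (a * c) + - b / (a * c) * \<phi> z) * \<phi>' z"
    using \<open>0 < c\<close> \<open>a \<noteq> 0\<close> by (simp add: field_simps)
  finally show ?thesis .
qed

end

text \<open>The consequences of (BBMG) used on the network: \<open>\<phi>'\<close> are the profile derivatives,
  \<open>kirchhoff\<close> is the vertex condition expressed through them, and \<open>unique_continuation\<close>
  comes from the profile ODE.\<close>

locale bbmg_wave_network =
  fixes E :: "nat set" and len :: "nat \<Rightarrow> real" and gam :: "nat \<Rightarrow> real \<Rightarrow> 'a::euclidean_space"
    and a c :: "nat \<Rightarrow> real" and u :: "'a \<Rightarrow> real \<Rightarrow> real" and \<phi> \<phi>' :: "nat \<Rightarrow> real \<Rightarrow> real"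
  assumes network: "network E len gam"
    and a_pos: "\<And>j. j \<in> E \<Longrightarrow> 0 < a j"
    and c_pos: "\<And>j. j \<in> E \<Longrightarrow> 0 < c j"
    and wave: "\<And>j x t. j \<in> E \<Longrightarrow> x \<in> {0..len j} \<Longrightarrow> 0 \<le> t \<Longrightarrow> u (gam j x) t = \<phi> j (x - c j * t)"
    and \<phi>': "\<And>j z. j \<in> E \<Longrightarrow> (\<phi> j has_real_derivative \<phi>' j z) (at z)"
    and kirchhoff: "\<And>v t. v \<in> ram_vertices E len gam \<Longrightarrow> 0 \<le> t \<Longrightarrow>
      (\<Sum>k\<in>incident E len gam v. iota len gam v k * a k * \<phi>' k (vparam len gam k v - c k * t)) = 0"
    and vertex_continuity: "\<And>v t j k. v \<in> ram_vertices E len gam \<Longrightarrow> 0 \<le> t \<Longrightarrow>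
      j \<in> incident E len gam v \<Longrightarrow> k \<in> incident E len gam v \<Longrightarrow>
      u (gam j (vparam len gam j v)) t = u (gam k (vparam len gam k v)) t"
    and unique_continuation: "\<And>j v C z. j \<in> E \<Longrightarrow>
      (\<And>t. 0 \<le> t \<Longrightarrow> \<phi> j (vparam len gam j v - c j * t) = C) \<Longrightarrow> z \<le> len j \<Longrightarrow> \<phi> j z = C"
begin

text \<open>Since \<open>x - c\<^sub>j t\<close> ranges over \<open>(-\<infinity>, len j]\<close>, \<open>const_profile C j\<close> says that
  \<open>u\<close> is identically \<open>C\<close> on edge \<open>j\<close> for \<open>t \<ge> 0\<close>.\<close>

definition const_profile :: "real \<Rightarrow> nat \<Rightarrow> bool" where
  "const_profile C j \<longleftrightarrow> (\<forall>z \<le> len j. \<phi> j z = C)"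

lemma incident_subset: "incident E len gam v \<subseteq> E"
  by (auto simp: incident_def)

lemma len_pos: "j \<in> E \<Longrightarrow> 0 < len j"
  using network by (simp add: network_def)

lemma finite_incident: "v \<in> vertices E len gam \<Longrightarrow> finite (incident E len gam v)"
  using network by (simp add: network_def)

lemma vertices_connected:
  "v \<in> vertices E len gam \<Longrightarrow> w \<in> vertices E len gam \<Longrightarrow> (v, w) \<in> {(x, y). adjacent E len gam x y}\<^sup>*"
  using network by (simp add: network_def)

lemma vparam_mem: "j \<in> E \<Longrightarrow> vparam len gam j v \<in> {0..len j}"
  using len_pos by (simp add: vparam_def less_imp_le)

lemma vertex_value:
  "j \<in> E \<Longrightarrow> 0 \<le> t \<Longrightarrow> u (gam j (vparam len gam j v)) t = \<phi> j (vparam len gam j v - c j * t)"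
  using wave vparam_mem by blast

lemma const_profile_iff_vertex_const:
  assumes "j \<in> E"
  shows "const_profile C j \<longleftrightarrow> (\<forall>t \<ge> 0. u (gam j (vparam len gam j v)) t = C)"
proof
  assume "const_profile C j"
  moreover have "vparam len gam j v - c j * t \<le> len j" if "0 \<le> t" for t
  proof -
    have "0 \<le> c j * t" using c_pos[OF assms] that by simp
    then show ?thesis using vparam_mem[OF assms, of v] by simp
  qed
  ultimately show "\<forall>t \<ge> 0. u (gam j (vparam len gam j v)) t = C"
    unfolding const_profile_def using vertex_value[OF assms] by simp
next
  assume "\<forall>t \<ge> 0. u (gam j (vparam len gam j v)) t = C"
  then have "\<phi> j (vparam len gam j v - c j * t) = C" if "0 \<le> t" for t
    by (metis that vertex_value[OF assms that])
  then show "const_profile C j"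
    unfolding const_profile_def using unique_continuation[OF assms] by blast
qed

lemma const_profile_at_ram_vertex:
  assumes "v \<in> ram_vertices E len gam" and "j \<in> incident E len gam v" "k \<in> incident E len gam v"
    and "const_profile C j"
  shows "const_profile C k"
proof -
  have "j \<in> E" "k \<in> E"
    using assms(2,3) incident_subset by auto
  then show ?thesis
    using assms(4) vertex_continuity[OF assms(1) _ assms(2,3)] const_profile_iff_vertex_const[of _ _ v]
    by simp
qed


lemma const_profile_across_edge:
  assumes "w \<in> vertices E len gam" and "e \<in> incident E len gam w" "k \<in> incident E len gam w"
    and "const_profile C e"
  shows "const_profile C k"
proof (cases "w \<in> ram_vertices E len gam")
  case True
  then show ?thesis using assms(2-4) const_profile_at_ram_vertex by blast
next
  case False
  then have "card (incident E len gam w) \<le> Suc 0"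
    using assms(1) by (simp add: ram_vertices_def)
  then have "k = e"
    using card_le_Suc0_iff_eq[OF finite_incident[OF assms(1)]] assms(2,3) by blast
  then show ?thesis using assms(4) by simp
qed

lemma const_profile_propagates:
  assumes "v \<in> vertices E len gam" and "\<And>k. k \<in> incident E len gam v \<Longrightarrow> const_profile C k"
    and "j \<in> E"
  shows "const_profile C j"
proof -
  have incident_const: "\<forall>k \<in> incident E len gam w. const_profile C k"
    if "(v, w) \<in> {(x, y). adjacent E len gam x y}\<^sup>*" for w
    using that
  proof (induction rule: rtrancl_induct)
    case base
    show ?case using assms(2) by blast
  next
    case (step w w')
    from step.hyps(2) obtain e where e: "e \<in> E" "ends len gam e = {w, w'}"
      unfolding adjacent_def by blast
    then have "e \<in> incident E len gam w" "e \<in> incident E len gam w'" "w' \<in> vertices E len gam"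
      unfolding incident_def vertices_def by blast+
    with step.IH show ?case
      using const_profile_across_edge by blast
  qed
  have "gam j 0 \<in> vertices E len gam" and "j \<in> incident E len gam (gam j 0)"
    using assms(3) unfolding vertices_def incident_def ends_def by blast+
  then show ?thesis
    using incident_const vertices_connected[OF assms(1)] by blast
qed

lemma vertex_time_derivatives_agree:
  assumes "v \<in> ram_vertices E len gam" and "j \<in> incident E len gam v" "k \<in> incident E len gam v"
    and "0 < t"
  shows "c j * \<phi>' j (vparam len gam j v - c j * t) = c k * \<phi>' k (vparam len gam k v - c k * t)"
proof -
  have "j \<in> E" "k \<in> E"
    using assms(2,3) incident_subset by auto
  have "((\<lambda>s. \<phi> j (vparam len gam j v - c j * s)) has_real_derivative
      - c k * \<phi>' k (vparam len gam k v - c k * t)) (at t)"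
  proof (rule has_field_derivative_transform_within_open
      [OF DERIV_travelling_wave_time[OF \<phi>'[OF \<open>k \<in> E\<close>]], of "{0<..}"])
    show "\<phi> k (vparam len gam k v - c k * s) = \<phi> j (vparam len gam j v - c j * s)" if "s \<in> {0<..}" for s
      using that vertex_value[OF \<open>j \<in> E\<close>] vertex_value[OF \<open>k \<in> E\<close>]
        vertex_continuity[OF assms(1) _ assms(2,3)] by simp
  qed (use assms(4) in auto)
  then show ?thesis
    using DERIV_travelling_wave_time[OF \<phi>'[OF \<open>j \<in> E\<close>]] DERIV_unique by fastforce
qed

lemma const_profile_at_sink_or_source:
  assumes v: "v \<in> ram_vertices E len gam"
    and "is_sink E len gam v \<or> is_source E len gam v"
  shows "\<exists>C. \<forall>k \<in> incident E len gam v. const_profile C k"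
proof -
  let ?I = "incident E len gam v"
  obtain \<sigma> :: real where "\<sigma> \<noteq> 0" and \<sigma>: "\<And>k. k \<in> ?I \<Longrightarrow> iota len gam v k = \<sigma>"
    using assms(2) unfolding is_sink_def is_source_def by (metis one_neq_zero neg_equal_0_iff_equal)
  have "finite ?I" "card ?I \<ge> 2"
    using v finite_incident unfolding ram_vertices_def by auto
  then obtain j where j: "j \<in> ?I" by fastforce
  then have "j \<in> E" using incident_subset by blast
  have slope_zero: "\<phi>' j (vparam len gam j v - c j * t) = 0" if "0 < t" for t
  proof -
    define D where "D = c j * \<phi>' j (vparam len gam j v - c j * t)"
    have "0 = (\<Sum>k\<in>?I. iota len gam v k * a k * \<phi>' k (vparam len gam k v - c k * t))"
      using kirchhoff[OF v] that by simp
    also have "\<dots> = (\<Sum>k\<in>?I. \<sigma> * D * (a k / c k))"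
    proof (rule sum.cong)
      fix k assume k: "k \<in> ?I"
      then have "0 < c k" using incident_subset c_pos by blast
      then show "iota len gam v k * a k * \<phi>' k (vparam len gam k v - c k * t) = \<sigma> * D * (a k / c k)"
        using vertex_time_derivatives_agree[OF v j k that] \<sigma>[OF k] unfolding D_def
        by (simp add: field_simps)
    qed simp
    also have "\<dots> = \<sigma> * D * (\<Sum>k\<in>?I. a k / c k)"
      by (simp add: sum_distrib_left)
    finally have "\<sigma> * D * (\<Sum>k\<in>?I. a k / c k) = 0" by simp
    moreover have "0 < (\<Sum>k\<in>?I. a k / c k)"
    proof (rule sum_pos)
      show "0 < a k / c k" if "k \<in> ?I" for k
        using that incident_subset a_pos c_pos by (meson divide_pos_pos subsetD)
    qed (use \<open>finite ?I\<close> j in auto)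
    ultimately show ?thesis
      using \<open>\<sigma> \<noteq> 0\<close> c_pos[OF \<open>j \<in> E\<close>] unfolding D_def by simp
  qed
  define g where "g s = \<phi> j (vparam len gam j v - c j * s)" for s
  have g_deriv: "(g has_real_derivative - c j * \<phi>' j (vparam len gam j v - c j * s)) (at s)" for s
    unfolding g_def by (rule DERIV_travelling_wave_time[OF \<phi>'[OF \<open>j \<in> E\<close>]])
  have "g t = g 0" if "0 < t" for t
  proof (rule DERIV_isconst_end[OF that])
    show "continuous_on {0..t} g"
      using g_deriv by (rule has_real_derivative_imp_continuous_on)
    show "(g has_real_derivative 0) (at s)" if "0 < s" "s < t" for s
      using g_deriv[of s] slope_zero[OF that(1)] by simp
  qed
  then have "g t = g 0" if "0 \<le> t" for t
    using that by (cases "t = 0") auto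
  then have "const_profile (g 0) j"
    using const_profile_iff_vertex_const[OF \<open>j \<in> E\<close>, of _ v] vertex_value[OF \<open>j \<in> E\<close>]
    unfolding g_def by simp
  then show ?thesis
    using const_profile_at_ram_vertex[OF v j] by blast
qed

theorem const_if_sink_or_source:
  assumes "v \<in> ram_vertices E len gam"
    and "is_sink E len gam v \<or> is_source E len gam v"
  shows "\<exists>C. \<forall>p \<in> net_points E len gam. \<forall>t \<ge> 0. u p t = C"
proof -
  obtain C where C: "\<forall>k \<in> incident E len gam v. const_profile C k"
    using const_profile_at_sink_or_source[OF assms] by blast
  have v: "v \<in> vertices E len gam"
    using assms(1) by (simp add: ram_vertices_def)
  have const: "const_profile C j" if "j \<in> E" for j
    using const_profile_propagates[OF v _ that] C by blast
  show ?thesis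
  proof (intro exI[of _ C] ballI allI impI)
    fix p and t :: real
    assume p: "p \<in> net_points E len gam" and t: "0 \<le> t"
    obtain j x where j: "j \<in> E" and x: "x \<in> {0..len j}" and p_eq: "p = gam j x"
      using p unfolding net_points_def edge_img_def by blast
    have "0 \<le> c j * t" using c_pos[OF j] t by simp
    then have "x - c j * t \<le> len j" using x by simp
    then have "\<phi> j (x - c j * t) = C"
      using const[OF j] unfolding const_profile_def by blast
    then show "u p t = C"
      using wave[OF j x t] p_eq by simp
  qed
qed

end

lemma travelling_wave_edges:
  fixes gam :: "nat \<Rightarrow> real \<Rightarrow> 'a::euclidean_space"
  assumes net: "network E len gam" and tw: "travelling_wave E len gam a b d u c \<phi>"
  obtains \<phi>' \<phi>'' \<phi>''' :: "nat \<Rightarrow> real \<Rightarrow> real" and ux ut utx utxx :: "nat \<Rightarrow> real \<Rightarrow> real \<Rightarrow> real"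
  where "\<And>j. j \<in> E \<Longrightarrow> bbm_travelling_wave_edge (len j) (c j) (\<phi> j) (\<phi>' j) (\<phi>'' j) (\<phi>''' j)
      (\<lambda>x t. u (gam j x) t) (ux j) (ut j) (utx j) (utxx j)"
    and "\<And>j x t. j \<in> E \<Longrightarrow> x \<in> {0<..<len j} \<Longrightarrow> 0 < t \<Longrightarrow>
      ut j x t - a j * utxx j x t + b j * u (gam j x) t * ux j x t + d j * ux j x t = 0"
    and "\<And>v t. v \<in> ram_vertices E len gam \<Longrightarrow> 0 \<le> t \<Longrightarrow>
      (\<Sum>k\<in>incident E len gam v. iota len gam v k * a k * ux k (vparam len gam k v) t) = 0"
    and "\<And>v t j k. v \<in> ram_vertices E len gam \<Longrightarrow> 0 \<le> t \<Longrightarrow>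
      j \<in> incident E len gam v \<Longrightarrow> k \<in> incident E len gam v \<Longrightarrow>
      u (gam j (vparam len gam j v)) t = u (gam k (vparam len gam k v)) t"
proof -
  from tw have sol: "strong_solution E len gam a b d u"
    and wave: "\<And>j x t. j \<in> E \<Longrightarrow> x \<in> {0..len j} \<Longrightarrow> 0 \<le> t \<Longrightarrow> u (gam j x) t = \<phi> j (x - c j * t)"
    and smooth: "\<And>j. j \<in> E \<Longrightarrow> C3 (\<phi> j)"
    unfolding travelling_wave_def by auto
  from sol obtain ux ut utx utxx :: "nat \<Rightarrow> real \<Rightarrow> real \<Rightarrow> real" where
    der: "\<forall>j\<in>E. \<forall>x\<in>{0..len j}. \<forall>t\<in>{0..}.
           ((\<lambda>y. u (gam j y) t) has_real_derivative ux j x t) (at x within {0..len j}) \<and>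
           ((\<lambda>s. u (gam j x) s) has_real_derivative ut j x t) (at t within {0..}) \<and>
           ((\<lambda>y. ut j y t) has_real_derivative utx j x t) (at x within {0..len j}) \<and>
           ((\<lambda>y. utx j y t) has_real_derivative utxx j x t) (at x within {0..len j})"
    and pde: "\<forall>j\<in>E. \<forall>x\<in>{0<..<len j}. \<forall>t>0.
           ut j x t - a j * utxx j x t + b j * u (gam j x) t * ux j x t + d j * ux j x t = 0"
    and kirchhoff: "\<forall>v\<in>ram_vertices E len gam. \<forall>t\<ge>0.
           (\<Sum>k\<in>incident E len gam v. iota len gam v k * a k * ux k (vparam len gam k v) t) = 0"
    and continuity: "\<forall>v\<in>ram_vertices E len gam. \<forall>t\<ge>0. \<forall>j\<in>incident E len gam v.
        \<forall>k\<in>incident E len gam v. u (gam j (vparam len gam j v)) t = u (gam k (vparam len gam k v)) t"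
    unfolding strong_solution_def by blast
  have "\<forall>j\<in>E. \<exists>f1 f2 f3. \<forall>z. (\<phi> j has_real_derivative f1 z) (at z) \<and>
      (f1 has_real_derivative f2 z) (at z) \<and> (f2 has_real_derivative f3 z) (at z)"
    using smooth unfolding C3_def by blast
  then obtain \<phi>' \<phi>'' \<phi>''' where derivs: "\<And>j z. j \<in> E \<Longrightarrow> (\<phi> j has_real_derivative \<phi>' j z) (at z) \<and>
      (\<phi>' j has_real_derivative \<phi>'' j z) (at z) \<and> (\<phi>'' j has_real_derivative \<phi>''' j z) (at z)"
    by metis
  have edge: "bbm_travelling_wave_edge (len j) (c j) (\<phi> j) (\<phi>' j) (\<phi>'' j) (\<phi>''' j)
      (\<lambda>x t. u (gam j x) t) (ux j) (ut j) (utx j) (utxx j)" if j: "j \<in> E" for j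
  proof
    show "0 < len j" using net j by (simp add: network_def)
    show "(\<phi> j has_real_derivative \<phi>' j z) (at z)" "(\<phi>' j has_real_derivative \<phi>'' j z) (at z)"
      "(\<phi>'' j has_real_derivative \<phi>''' j z) (at z)" for z
      using derivs[OF j] by blast+
    fix x t assume x: "x \<in> {0..len j}" and t: "0 \<le> (t::real)"
    show "u (gam j x) t = \<phi> j (x - c j * t)" using wave[OF j x t] .
    from t have "t \<in> {0..}" by simp
    with der j x show "((\<lambda>y. u (gam j y) t) has_real_derivative ux j x t) (at x within {0..len j})"
      "((\<lambda>s. u (gam j x) s) has_real_derivative ut j x t) (at t within {0..})"
      "((\<lambda>y. ut j y t) has_real_derivative utx j x t) (at x within {0..len j})"
      "((\<lambda>y. utx j y t) has_real_derivative utxx j x t) (at x within {0..len j})"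
      by blast+
  qed
  show thesis
    by (rule that[OF edge]) (use pde kirchhoff continuity in blast)+
qed

lemma travelling_wave_bbmg_wave_network:
  fixes gam :: "nat \<Rightarrow> real \<Rightarrow> 'a::euclidean_space"
  assumes net: "network E len gam" and a_pos: "\<forall>j\<in>E. 0 < a j" and c_pos: "\<forall>j\<in>E. 0 < c j"
    and tw: "travelling_wave E len gam a b d u c \<phi>"
  obtains \<phi>' where "bbmg_wave_network E len gam a c u \<phi> \<phi>'"
proof -
  obtain \<phi>' \<phi>'' \<phi>''' ux ut utx utxx where
    edge: "\<And>j. j \<in> E \<Longrightarrow> bbm_travelling_wave_edge (len j) (c j) (\<phi> j) (\<phi>' j) (\<phi>'' j) (\<phi>''' j)
      (\<lambda>x t. u (gam j x) t) (ux j) (ut j) (utx j) (utxx j)"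
    and pde: "\<And>j x t. j \<in> E \<Longrightarrow> x \<in> {0<..<len j} \<Longrightarrow> 0 < t \<Longrightarrow>
      ut j x t - a j * utxx j x t + b j * u (gam j x) t * ux j x t + d j * ux j x t = 0"
    and kirchhoff: "\<And>v t. v \<in> ram_vertices E len gam \<Longrightarrow> 0 \<le> t \<Longrightarrow>
      (\<Sum>k\<in>incident E len gam v. iota len gam v k * a k * ux k (vparam len gam k v) t) = 0"
    and continuity: "\<And>v t j k. v \<in> ram_vertices E len gam \<Longrightarrow> 0 \<le> t \<Longrightarrow>
      j \<in> incident E len gam v \<Longrightarrow> k \<in> incident E len gam v \<Longrightarrow>
      u (gam j (vparam len gam j v)) t = u (gam k (vparam len gam k v)) t"
    using travelling_wave_edges[OF net tw] by blast
  have "bbmg_wave_network E len gam a c u \<phi> \<phi>'"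
  proof (unfold_locales; (fact net continuity bbm_travelling_wave_edge.wave[OF edge]
        bbm_travelling_wave_edge.\<phi>'[OF edge])?)
    show "0 < a j" "0 < c j" if "j \<in> E" for j
      using a_pos c_pos that by auto
  next
    fix v and t :: real assume v: "v \<in> ram_vertices E len gam" and t: "0 \<le> t"
    have "ux k (vparam len gam k v) t = \<phi>' k (vparam len gam k v - c k * t)"
      if "k \<in> incident E len gam v" for k
    proof -
      have k: "k \<in> E" using that by (simp add: incident_def)
      then have "vparam len gam k v \<in> {0..len k}"
        using bbm_travelling_wave_edge.len_pos[OF edge] by (simp add: vparam_def less_imp_le)
      then show ?thesis
        using bbm_travelling_wave_edge.wx_eq[OF edge[OF k]] t by blast
    qed
    then show "(\<Sum>k\<in>incident E len gam v. iota len gam v k * a k * \<phi>' k (vparam len gam k v - c k * t)) = 0"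
      using kirchhoff[OF v t] by (simp cong: sum.cong)
  next
    fix j v C z
    assume j: "j \<in> E" and const: "\<And>t. 0 \<le> t \<Longrightarrow> \<phi> j (vparam len gam j v - c j * t) = C"
      and "z \<le> len j"
    have ode: "\<phi>''' j y = ((c j - d j) / (a j * c j) + - b j / (a j * c j) * \<phi> j y) * \<phi>' j y"
      if "y < len j" for y
      by (rule bbm_travelling_wave_edge.profile_ode[OF edge[OF j]]) (use that j a_pos c_pos pde in auto)
    show "\<phi> j z = C"
    proof (rule third_order_ode_const_from_endpoint[OF bbm_travelling_wave_edge.\<phi>'[OF edge[OF j]]
          bbm_travelling_wave_edge.\<phi>''[OF edge[OF j]] bbm_travelling_wave_edge.\<phi>'''[OF edge[OF j]] ode])
      show "0 < c j" using c_pos j by blast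
      show "vparam len gam j v = 0 \<or> vparam len gam j v = len j"
        by (simp add: vparam_def)
    qed (use const \<open>z \<le> len j\<close> in simp_all)
  qed
  then show thesis ..
qed

theorem lemma3p6:
  fixes E :: "nat set" and len :: "nat \<Rightarrow> real" and gam :: "nat \<Rightarrow> real \<Rightarrow> 'a::euclidean_space"
    and a b d c :: "nat \<Rightarrow> real" and u :: "'a \<Rightarrow> real \<Rightarrow> real" and phi :: "nat \<Rightarrow> real \<Rightarrow> real"
  assumes "network E len gam"
    and "\<forall>j\<in>E. a j > 0 \<and> b j \<noteq> 0"
    and "travelling_wave E len gam a b d u c phi"
    and "\<forall>j\<in>E. c j > 0"
    and "\<not> (\<exists>C. \<forall>p\<in>net_points E len gam. \<forall>t\<ge>0. u p t = C)"
  shows "\<forall>v\<in>ram_vertices E len gam. \<not> is_sink E len gam v \<and> \<not> is_source E len gam v"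
proof -
  obtain phi' where "bbmg_wave_network E len gam a c u phi phi'"
    using travelling_wave_bbmg_wave_network assms(1-4) by blast
  then show ?thesis
    using bbmg_wave_network.const_if_sink_or_source assms(5) by blast
qed

end
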